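(* We have $\mathrm{ppn}(K_{1,1,c})=1$ for all positive integers $c$ if and only if the Twin Prime Conjecture (there are infinitely many primes $p$ such that $p+2$ is also prime) is true.
   Context: $K_{1,1,c}$ is the complete 3-partite graph with partite sets of sizes $1,1,c$. A $k$-prime product distance labeling of a finite graph $G$ (for a positive integer $k$) is an injective map $L:V(G)\to\mathbb{Z}$ such that $|L(u)-L(v)|>1$ for all distinct vertices $u,v$ of $G$, and such that for every pair of adjacent vertices $u,v$ the integer $|L(u)-L(v)|$ has at most $k$ prime factors counted with multiplicity. The prime product number $\mathrm{ppn}(G)$ is the least positive integer $k$ such that $G$ has a $k$-prime product distance labeling. *)

theory Defs
  imports "HOL-Computational_Algebra.Primes"
begin

text \<open>K_{1,1,c}: vertices 0, 1, 2, ..., c+1; partite sets {0}, {1}, {2..c+1}.\<close>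
definition K11c_V :: "nat \<Rightarrow> nat set" where
  "K11c_V c = {0..c+1}"

definition K11c_part :: "nat \<Rightarrow> nat" where
  "K11c_part v = min v 2"

definition K11c_E :: "nat \<Rightarrow> nat \<Rightarrow> nat \<Rightarrow> bool" where
  "K11c_E c u v \<longleftrightarrow> u \<in> K11c_V c \<and> v \<in> K11c_V c \<and> K11c_part u \<noteq> K11c_part v"

definition Omega :: "nat \<Rightarrow> nat" where
  "Omega n = size (prime_factorization n)"

definition is_prime_product_labeling ::
    "'a set \<Rightarrow> ('a \<Rightarrow> 'a \<Rightarrow> bool) \<Rightarrow> nat \<Rightarrow> ('a \<Rightarrow> int) \<Rightarrow> bool" where
  "is_prime_product_labeling V E k L \<longleftrightarrow>
     inj_on L V \<and>
     (\<forall>u\<in>V. \<forall>v\<in>V. u \<noteq> v \<longrightarrow> \<bar>L u - L v\<bar> > 1) \<and>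
     (\<forall>u\<in>V. \<forall>v\<in>V. E u v \<longrightarrow> Omega (nat \<bar>L u - L v\<bar>) \<le> k)"

definition ppn :: "'a set \<Rightarrow> ('a \<Rightarrow> 'a \<Rightarrow> bool) \<Rightarrow> nat" where
  "ppn V E = (LEAST k. 0 < k \<and> (\<exists>L. is_prime_product_labeling V E k L))"

end

theory Submission
  imports Defs
begin

text \<open>In a 1-labeling of \<open>K\<^sub>1\<^sub>,\<^sub>1\<^sub>,\<^sub>c\<close> every edge length is prime. Let \<open>a, b\<close> label the two
  singleton parts; \<open>|a - b|\<close> is prime and every other label \<open>x\<close> is at prime distance from both.
  If \<open>a - b\<close> is odd, one of \<open>x - a, x - b\<close> is an even prime, so \<open>x \<in> {a \<plusminus> 2, b \<plusminus> 2}\<close>.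
  Otherwise \<open>|a - b| = 2\<close>, and \<open>x - min a b\<close> and \<open>x - min a b - 2\<close> are primes up to sign, so
  \<open>x\<close> is determined by a twin prime pair and a side: at most \<open>2 T\<close> labels if there are only
  \<open>T\<close> twin pairs. Conversely, infinitely many twin pairs \<open>(p, p + 2)\<close> give the 1-labeling
  \<open>0, 2, p\<^sub>1 + 2, \<dots>, p\<^sub>c + 2\<close>.\<close>

lemma Omega_prime: "prime p \<Longrightarrow> Omega p = 1"
  by (simp add: Omega_def prime_factorization_prime)

lemma prime_if_Omega_le_1:
  assumes "2 \<le> n" "Omega n \<le> 1"
  shows "prime n"
proof -
  have n_eq: "n = prod_mset (prime_factorization n)"
    using assms(1) by (simp add: prod_mset_prime_factorization)
  have "size (prime_factorization n) \<le> 1"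
    using assms(2) by (simp add: Omega_def)
  then consider "prime_factorization n = {#}" | p where "prime_factorization n = {#p#}"
    by (metis One_nat_def le_SucE le_zero_eq size_1_singleton_mset size_eq_0_iff_empty)
  then show ?thesis
  proof cases
    case 1
    then show ?thesis using n_eq assms(1) by simp
  next
    case 2
    then have "prime p" by (metis in_prime_factors_imp_prime union_single_eq_member)
    then show ?thesis using n_eq 2 by simp
  qed
qed

lemma even_distance_gt_1:
  fixes x y :: int
  assumes "x \<noteq> y" "even (x - y)"
  shows "\<bar>x - y\<bar> > 1"
proof -
  obtain k where k: "x - y = 2 * k"
    using assms(2) by (rule evenE)
  with assms(1) have "k \<noteq> 0" by auto
  with k show ?thesis by (auto simp: abs_mult)
qed

lemma prime_product_labeling_exists:
  assumes "finite V"
  shows "\<exists>k L. 0 < k \<and> is_prime_product_labeling V E k L"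
proof -
  obtain f :: "'a \<Rightarrow> nat" where f: "inj_on f V"
    using finite_imp_inj_to_nat_seg[OF assms] by blast
  define L where "L v = 2 * int (f v)" for v
  define k where "k = 1 + (\<Sum>(u, v)\<in>V \<times> V. Omega (nat \<bar>L u - L v\<bar>))"
  have "is_prime_product_labeling V E k L"
    unfolding is_prime_product_labeling_def
  proof (intro conjI ballI impI)
    show "inj_on L V"
      using f by (auto simp: inj_on_def L_def)
  next
    fix u v assume "u \<in> V" "v \<in> V" "u \<noteq> v"
    then show "\<bar>L u - L v\<bar> > 1"
      using f by (intro even_distance_gt_1) (auto simp: L_def inj_on_def)
  next
    fix u v assume "u \<in> V" "v \<in> V"
    then have "Omega (nat \<bar>L u - L v\<bar>) \<le> (\<Sum>(u, v)\<in>V \<times> V. Omega (nat \<bar>L u - L v\<bar>))"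
      using member_le_sum[of "(u, v)" "V \<times> V" "\<lambda>(u, v). Omega (nat \<bar>L u - L v\<bar>)"] assms
      by auto
    then show "Omega (nat \<bar>L u - L v\<bar>) \<le> k"
      unfolding k_def by simp
  qed
  then show ?thesis
    unfolding k_def by blast
qed

text \<open>Without finiteness the \<open>LEAST\<close> in \<^const>\<open>ppn\<close> could range over an empty predicate.\<close>

lemma ppn_eq_1_iff:
  assumes "finite V"
  shows "ppn V E = 1 \<longleftrightarrow> (\<exists>L. is_prime_product_labeling V E 1 L)"
proof -
  define P where "P k \<longleftrightarrow> 0 < k \<and> (\<exists>L. is_prime_product_labeling V E k L)" for k
  have ppn_eq: "ppn V E = (LEAST k. P k)"
    unfolding ppn_def P_def ..
  show ?thesis
  proof
    assume "ppn V E = 1"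
    moreover have "\<exists>k. P k"
      using prime_product_labeling_exists[OF assms] unfolding P_def by blast
    then have "P (LEAST k. P k)"
      by (rule LeastI_ex)
    ultimately show "\<exists>L. is_prime_product_labeling V E 1 L"
      unfolding ppn_eq P_def by simp
  next
    assume "\<exists>L. is_prime_product_labeling V E 1 L"
    then have "(LEAST k. P k) = 1"
      by (intro Least_equality) (auto simp: P_def)
    then show "ppn V E = 1"
      unfolding ppn_eq .
  qed
qed

lemma prime_distance_if_labeling_1:
  assumes "is_prime_product_labeling V E 1 L" "u \<in> V" "v \<in> V" "E u v" "u \<noteq> v"
  shows "prime (nat \<bar>L u - L v\<bar>)"
  using assms by (intro prime_if_Omega_le_1) (fastforce simp: is_prime_product_labeling_def)+

lemma even_prime_distance:
  fixes y :: int
  assumes "prime (nat \<bar>y\<bar>)" "even y"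
  shows "y = 2 \<or> y = -2"
proof -
  have "even (nat \<bar>y\<bar>)"
    using assms(2) by (simp add: even_nat_iff)
  then have "nat \<bar>y\<bar> = 2"
    using assms(1) prime_odd_nat prime_ge_2_nat by (metis le_neq_implies_less)
  then show ?thesis by auto
qed

lemma twin_prime_odd:
  assumes "prime (p::nat)" "prime (p + 2)"
  shows "odd p"
  using assms prime_ge_2_nat[OF assms(1)] prime_odd_nat[OF assms(2)] by auto

lemma twin_prime_distances:
  fixes r :: int
  assumes "prime (nat \<bar>r\<bar>)" "prime (nat \<bar>r - 2\<bar>)"
  shows "r \<in> (\<lambda>p. 2 + int p) ` {p. prime p \<and> prime (p + 2)} \<union>
             (\<lambda>p. - int p) ` {p. prime p \<and> prime (p + 2)}"
proof (cases "r > 2")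
  case True
  then have "nat \<bar>r - 2\<bar> + 2 = nat \<bar>r\<bar>" "r = 2 + int (nat \<bar>r - 2\<bar>)" by auto
  then show ?thesis using assms by (metis (mono_tags, lifting) UnI1 image_eqI mem_Collect_eq)
next
  case False
  have "r \<noteq> 0" "r \<noteq> 1" "r \<noteq> 2"
    using assms by auto
  with False have "r < 0" by auto
  then have "nat \<bar>r\<bar> + 2 = nat \<bar>r - 2\<bar>" "r = - int (nat \<bar>r\<bar>)" by auto
  then show ?thesis using assms by (metis (mono_tags, lifting) UnI2 image_eqI mem_Collect_eq)
qed

lemma prime_distances_odd_gap:
  fixes a b x :: int
  assumes "odd (a - b)" "prime (nat \<bar>x - a\<bar>)" "prime (nat \<bar>x - b\<bar>)"
  shows "x \<in> {a - 2, a + 2, b - 2, b + 2}"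
proof -
  have "even (x - a) \<or> even (x - b)"
    using assms(1) by presburger
  then have "x - a = 2 \<or> x - a = -2 \<or> x - b = 2 \<or> x - b = -2"
    using even_prime_distance assms(2,3) by blast
  then show ?thesis by auto
qed

lemma prime_distances_gap_2:
  fixes a b x :: int
  assumes "\<bar>a - b\<bar> = 2" "prime (nat \<bar>x - a\<bar>)" "prime (nat \<bar>x - b\<bar>)"
  shows "x \<in> (\<lambda>p. min a b + 2 + int p) ` {p. prime p \<and> prime (p + 2)} \<union>
             (\<lambda>p. min a b - int p) ` {p. prime p \<and> prime (p + 2)}"
proof -
  have "prime (nat \<bar>x - min a b\<bar>) \<and> prime (nat \<bar>x - min a b - 2\<bar>)"
  proof (cases "a \<le> b")
    case True
    with assms(1) have "x - min a b = x - a" "x - min a b - 2 = x - b" by auto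
    with assms(2,3) show ?thesis by metis
  next
    case False
    with assms(1) have "x - min a b = x - b" "x - min a b - 2 = x - a" by auto
    with assms(2,3) show ?thesis by metis
  qed
  then have "x - min a b \<in> (\<lambda>p. 2 + int p) ` {p. prime p \<and> prime (p + 2)} \<union>
                         (\<lambda>p. - int p) ` {p. prime p \<and> prime (p + 2)}"
    using twin_prime_distances by blast
  then show ?thesis
    by (auto simp: image_iff algebra_simps)
qed

lemma card_prime_distances_le:
  fixes a b :: int and X :: "int set"
  assumes fin: "finite {p::nat. prime p \<and> prime (p + 2)}"
    and ab: "prime (nat \<bar>a - b\<bar>)"
    and X: "\<And>x. x \<in> X \<Longrightarrow> prime (nat \<bar>x - a\<bar>) \<and> prime (nat \<bar>x - b\<bar>)"
  shows "card X \<le> max 4 (2 * card {p::nat. prime p \<and> prime (p + 2)})"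
proof (cases "even (a - b)")
  case False
  then have "X \<subseteq> {a - 2, a + 2, b - 2, b + 2}"
    using X prime_distances_odd_gap by blast
  then have "card X \<le> card {a - 2, a + 2, b - 2, b + 2}"
    by (rule card_mono[rotated]) simp
  also have "\<dots> \<le> 4"
    by (intro card_insert_le_m1) auto
  finally show ?thesis by simp
next
  case True
  define T where "T = {p::nat. prime p \<and> prime (p + 2)}"
  have "\<bar>a - b\<bar> = 2"
    using even_prime_distance[OF ab True] by auto
  then have "X \<subseteq> (\<lambda>p. min a b + 2 + int p) ` T \<union> (\<lambda>p. min a b - int p) ` T"
    using X prime_distances_gap_2 unfolding T_def by blast
  then have "card X \<le> card ((\<lambda>p. min a b + 2 + int p) ` T \<union> (\<lambda>p. min a b - int p) ` T)"
    using fin unfolding T_def by (intro card_mono) auto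
  also have "\<dots> \<le> card ((\<lambda>p. min a b + 2 + int p) ` T) + card ((\<lambda>p. min a b - int p) ` T)"
    by (rule card_Un_le)
  also have "\<dots> \<le> 2 * card T"
    using card_image_le[OF fin[folded T_def], of "\<lambda>p. min a b + 2 + int p"]
      card_image_le[OF fin[folded T_def], of "\<lambda>p. min a b - int p"] by simp
  finally show ?thesis
    unfolding T_def by simp
qed

lemma K11c_E_cases:
  assumes "K11c_E c u v"
  obtains "u \<in> {0, 1}" "v \<in> {0, 1}" "u \<noteq> v"
    | "u \<in> {0, 1}" "v \<in> {2..c+1}"
    | "u \<in> {2..c+1}" "v \<in> {0, 1}"
  using assms unfolding K11c_E_def K11c_V_def K11c_part_def by fastforce

lemma K11c_size_le_if_labeling_1:
  assumes lab: "is_prime_product_labeling (K11c_V c) (K11c_E c) 1 L"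
    and fin: "finite {p::nat. prime p \<and> prime (p + 2)}"
  shows "c \<le> max 4 (2 * card {p::nat. prime p \<and> prime (p + 2)})"
proof -
  have sub: "{2..c+1} \<subseteq> K11c_V c" "0 \<in> K11c_V c" "1 \<in> K11c_V c"
    by (auto simp: K11c_V_def)
  have edge: "K11c_E c v 0" "K11c_E c v 1" if "v \<in> {2..c+1}" for v
    using that by (auto simp: K11c_E_def K11c_V_def K11c_part_def)
  have "inj_on L {2..c+1}"
    using lab sub(1) unfolding is_prime_product_labeling_def by (blast intro: inj_on_subset)
  then have "c = card (L ` {2..c+1})"
    by (simp add: card_image)
  also have "\<dots> \<le> max 4 (2 * card {p::nat. prime p \<and> prime (p + 2)})"
  proof (rule card_prime_distances_le[OF fin])
    show "prime (nat \<bar>L 0 - L 1\<bar>)"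
      by (rule prime_distance_if_labeling_1[OF lab sub(2,3)])
        (auto simp: K11c_E_def K11c_V_def K11c_part_def)
  next
    fix x assume "x \<in> L ` {2..c+1}"
    then obtain v where v: "v \<in> {2..c+1}" "x = L v" by blast
    then have "v \<in> K11c_V c" "v \<noteq> 0" "v \<noteq> 1"
      using sub(1) by auto
    then show "prime (nat \<bar>x - L 0\<bar>) \<and> prime (nat \<bar>x - L 1\<bar>)"
      using prime_distance_if_labeling_1[OF lab] sub(2,3) edge[OF v(1)] v(2) by blast
  qed
  finally show ?thesis .
qed

definition twin_prime_label :: "(nat \<Rightarrow> nat) \<Rightarrow> nat \<Rightarrow> int" where
  "twin_prime_label h v = (if v = 0 then 0 else if v = 1 then 2 else int (h v) + 2)"

context
  fixes c :: nat and h :: "nat \<Rightarrow> nat"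
  assumes twin: "\<And>v. v \<in> {2..c+1} \<Longrightarrow> prime (h v) \<and> prime (h v + 2)"
begin

private abbreviation (input) L where "L \<equiv> twin_prime_label h"

private lemma L_upper: "v \<in> {2..c+1} \<Longrightarrow> L v = int (h v) + 2"
  by (simp add: twin_prime_label_def)

lemma twin_prime_label_distance_gt_1:
  assumes inj: "inj_on h {2..c+1}"
    and uv: "u \<in> K11c_V c" "v \<in> K11c_V c" "u \<noteq> v"
  shows "\<bar>L u - L v\<bar> > 1"
proof -
  have upper: "\<bar>L u - L v\<bar> > 1" if "u \<in> {2..c+1}" "v \<in> {2..c+1}" "u \<noteq> v" for u v
  proof -
    have "h u \<noteq> h v"
      using inj_onD[OF inj] that by blast
    moreover have "even (int (h u) - int (h v))"
      using twin_prime_odd twin[OF that(1)] twin[OF that(2)] by simp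
    ultimately show ?thesis
      using even_distance_gt_1[of "int (h u)" "int (h v)"] L_upper[OF that(1)] L_upper[OF that(2)]
      by simp
  qed
  have lower_upper: "\<bar>L u - L v\<bar> > 1" if "u \<in> {0, 1}" "v \<in> {2..c+1}" for u v
    using that prime_ge_2_nat[of "h v"] twin[OF that(2)] by (auto simp: twin_prime_label_def)
  have "K11c_V c = {0, 1} \<union> {2..c+1}"
    by (auto simp: K11c_V_def)
  then consider "u \<in> {0, 1}" "v \<in> {0, 1}" | "u \<in> {0, 1}" "v \<in> {2..c+1}"
    | "u \<in> {2..c+1}" "v \<in> {0, 1}" | "u \<in> {2..c+1}" "v \<in> {2..c+1}"
    using uv(1,2) by blast
  then show ?thesis
  proof cases
    case 1
    then show ?thesis using uv(3) by (auto simp: twin_prime_label_def)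
  next
    case 2
    then show ?thesis by (rule lower_upper)
  next
    case 3
    then show ?thesis using lower_upper[of v u] by (simp add: abs_minus_commute)
  next
    case 4
    then show ?thesis using uv(3) by (rule upper)
  qed
qed

lemma twin_prime_label_edge_prime:
  assumes "K11c_E c u v"
  shows "prime (nat \<bar>L u - L v\<bar>)"
proof -
  have lower_upper: "prime (nat \<bar>L u - L v\<bar>)" if "u \<in> {0, 1}" "v \<in> {2..c+1}" for u v
  proof -
    have "nat \<bar>L u - L v\<bar> \<in> {h v, h v + 2}"
      using that L_upper[OF that(2)] by (auto simp: twin_prime_label_def)
    then show ?thesis
      using twin[OF that(2)] by (metis empty_iff insertE)
  qed
  from assms show ?thesis
  proof (cases rule: K11c_E_cases)
    case 1
    then show ?thesis by (auto simp: twin_prime_label_def)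
  next
    case 2
    then show ?thesis by (rule lower_upper)
  next
    case 3
    then show ?thesis using lower_upper[of v u] by (simp add: abs_minus_commute)
  qed
qed

end

lemma K11c_labeling_1_if_twin_primes:
  assumes "infinite {p::nat. prime p \<and> prime (p + 2)}"
  shows "\<exists>L. is_prime_product_labeling (K11c_V c) (K11c_E c) 1 L"
proof -
  obtain S where S: "S \<subseteq> {p::nat. prime p \<and> prime (p + 2)}" "finite S" "card S = c"
    using infinite_arbitrarily_large[OF assms] by blast
  then obtain h where h: "bij_betw h {2..c+1} S"
    using finite_same_card_bij[of "{2..c+1}" S] by auto
  have twin: "prime (h v) \<and> prime (h v + 2)" if "v \<in> {2..c+1}" for v
    using S(1) bij_betw_apply[OF h that] by auto
  note sep = twin_prime_label_distance_gt_1[OF twin bij_betw_imp_inj_on[OF h]]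
  have "inj_on (twin_prime_label h) (K11c_V c)"
    using sep by (fastforce simp: inj_on_def)
  then have "is_prime_product_labeling (K11c_V c) (K11c_E c) 1 (twin_prime_label h)"
    unfolding is_prime_product_labeling_def
    using sep twin_prime_label_edge_prime[OF twin] Omega_prime by simp
  then show ?thesis by blast
qed

theorem mainTheorem7:
  shows "(\<forall>c::nat. 0 < c \<longrightarrow> ppn (K11c_V c) (K11c_E c) = 1) \<longleftrightarrow>
         infinite {p::nat. prime p \<and> prime (p + 2)}"
proof
  assume ppn_1: "\<forall>c::nat. 0 < c \<longrightarrow> ppn (K11c_V c) (K11c_E c) = 1"
  show "infinite {p::nat. prime p \<and> prime (p + 2)}"
  proof
    assume fin: "finite {p::nat. prime p \<and> prime (p + 2)}"
    define c where "c = 2 * card {p::nat. prime p \<and> prime (p + 2)} + 5"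
    have "ppn (K11c_V c) (K11c_E c) = 1"
      using ppn_1 unfolding c_def by simp
    then obtain L where "is_prime_product_labeling (K11c_V c) (K11c_E c) 1 L"
      using ppn_eq_1_iff[of "K11c_V c"] by (auto simp: K11c_V_def)
    from K11c_size_le_if_labeling_1[OF this fin] show False
      unfolding c_def by simp
  qed
next
  assume "infinite {p::nat. prime p \<and> prime (p + 2)}"
  then have "ppn (K11c_V c) (K11c_E c) = 1" for c
    using K11c_labeling_1_if_twin_primes ppn_eq_1_iff[of "K11c_V c"] by (auto simp: K11c_V_def)
  then show "\<forall>c::nat. 0 < c \<longrightarrow> ppn (K11c_V c) (K11c_E c) = 1"
    by blast
qed

end
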